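(* Let the theory be one of the following: quantum many-worlds theory, unnormalised quantum many-worlds theory, or stochastic many-worlds theory. Let $p$ be a probability rule for that theory satisfying Axioms (A1)–(A3). Let $v=\sum_{n=0}^{N-1}v_n\lvert n\rangle$ be an allowed bounded state with $|v_l|>|v_k|$ for some indices $l,k$. Then $p_l(v)\ge p_k(v)$.
   Context: A linear many-worlds theory consists of the following data. The worlds are the vectors $\lvert n\rangle$, $n\in\{0,1,2,\dots\}$, of a countably infinite orthonormal basis of a real or complex vector space. A state is a vector $v=\sum_n v_n\lvert n\rangle$, and $v_n=\langle n\vert v\rangle$ is the amplitude of world $n$. A transformation is a linear operator $T$ with matrix elements $T_{ij}=\langle i\rvert T\lvert j\rangle$, acting by $v\mapsto Tv$. A theory specifies a set of allowed states and a set of allowed transformations, and every allowed transformation maps allowed states to allowed states. A state is bounded if only finitely many of its amplitudes are nonzero. The three theories are: - Quantum many-worlds theory: the allowed states are complex vectors with $\langle v\vert v\rangle=\sum_n|v_n|^2=1$, and the allowed transformations are all unitary operators. - Unnormalised quantum many-worlds theory: the allowed states are complex vectors with $0<\sum_n|v_n|^2<\infty$, and the allowed transformations are all unitary operators. - Stochastic many-worlds theory: the allowed states are real vectors with $v_n\ge0$ for all $n$ and $\sum_n v_n=1$, and the allowed transformations are the $T$ with $T_{ij}\ge0$ for all $i,j$ and $\sum_i T_{ij}=1$ for all $j$. A probability rule assigns to each allowed state $v$ a sequence $(p_n(v))_{n\ge 0}$ of nonnegative reals with $\sum_n p_n(v)=1$. The axioms are: (A1) Present state dependence: $p_n$ depends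 only on the present state $v$, so $p$ is a function of the state alone. (A2) Weak connection with amplitudes: for every allowed state $v$, $v_n=0$ implies $p_n(v)=0$. (A3) Weak connection with transformations: for every allowed state $v$ and allowed transformation $T$, and every partition of $\{0,1,2,\dots\}$ into subsets $\mathcal S_k$ such that $T_{ij}=0$ whenever $i$ and $j$ lie in different subsets, we have $\sum_{n\in\mathcal S_k}p_n(v)=\sum_{n\in\mathcal S_k}p_n(Tv)$ for every $k$. *)

theory Defs
  imports "HOL-Analysis.Analysis"
begin

text \<open>States are functions nat => scalar (amplitudes of the worlds |n>);
  transformations are given by their matrices T i j = <i|T|j>.\<close>

definition mat_apply :: "(nat \<Rightarrow> nat \<Rightarrow> 'a::real_normed_algebra) \<Rightarrow> (nat \<Rightarrow> 'a) \<Rightarrow> (nat \<Rightarrow> 'a)" where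
  "mat_apply T v = (\<lambda>i. \<Sum>\<^sub>\<infinity>j. T i j * v j)"

definition is_l2 :: "(nat \<Rightarrow> complex) \<Rightarrow> bool" where
  "is_l2 v \<longleftrightarrow> (\<lambda>n. (cmod (v n))^2) summable_on UNIV"

definition l2norm_sq :: "(nat \<Rightarrow> complex) \<Rightarrow> real" where
  "l2norm_sq v = (\<Sum>\<^sub>\<infinity>n. (cmod (v n))^2)"

definition unitary_mat :: "(nat \<Rightarrow> nat \<Rightarrow> complex) \<Rightarrow> bool" where
  "unitary_mat T \<longleftrightarrow>
     (\<forall>v. is_l2 v \<longrightarrow> (\<forall>i. (\<lambda>j. T i j * v j) summable_on UNIV)
                    \<and> is_l2 (mat_apply T v) \<and> l2norm_sq (mat_apply T v) = l2norm_sq v)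
   \<and> (\<forall>w. is_l2 w \<longrightarrow> (\<exists>v. is_l2 v \<and> mat_apply T v = w))"

definition quantum_states :: "(nat \<Rightarrow> complex) set" where
  "quantum_states = {v. ((\<lambda>n. (cmod (v n))^2) has_sum 1) UNIV}"

definition unnormalised_states :: "(nat \<Rightarrow> complex) set" where
  "unnormalised_states = {v. is_l2 v \<and> 0 < l2norm_sq v}"

definition unitary_transformations :: "(nat \<Rightarrow> nat \<Rightarrow> complex) set" where
  "unitary_transformations = {T. unitary_mat T}"

definition stochastic_states :: "(nat \<Rightarrow> real) set" where
  "stochastic_states = {v. (\<forall>n. 0 \<le> v n) \<and> (v has_sum 1) UNIV}"

definition stochastic_transformations :: "(nat \<Rightarrow> nat \<Rightarrow> real) set" where
  "stochastic_transformations =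
     {T. (\<forall>i j. 0 \<le> T i j) \<and> (\<forall>j. ((\<lambda>i. T i j) has_sum 1) UNIV)}"

text \<open>A probability rule is a function p of the state alone (A1 is built in).\<close>
definition probability_rule :: "(nat \<Rightarrow> 'a) set \<Rightarrow> ((nat \<Rightarrow> 'a) \<Rightarrow> nat \<Rightarrow> real) \<Rightarrow> bool" where
  "probability_rule S p \<longleftrightarrow> (\<forall>v\<in>S. (\<forall>n. 0 \<le> p v n) \<and> (p v has_sum 1) UNIV)"

definition axiom_A2 :: "(nat \<Rightarrow> 'a::zero) set \<Rightarrow> ((nat \<Rightarrow> 'a) \<Rightarrow> nat \<Rightarrow> real) \<Rightarrow> bool" where
  "axiom_A2 S p \<longleftrightarrow> (\<forall>v\<in>S. \<forall>n. v n = 0 \<longrightarrow> p v n = 0)"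

text \<open>Partitions of nat into subsets S_k are given by a labelling c: S_k = {n. c n = k}.\<close>
definition axiom_A3 :: "(nat \<Rightarrow> 'a::real_normed_algebra) set \<Rightarrow> (nat \<Rightarrow> nat \<Rightarrow> 'a) set
      \<Rightarrow> ((nat \<Rightarrow> 'a) \<Rightarrow> nat \<Rightarrow> real) \<Rightarrow> bool" where
  "axiom_A3 S Tr p \<longleftrightarrow>
     (\<forall>v\<in>S. \<forall>T\<in>Tr. \<forall>c::nat \<Rightarrow> nat.
        (\<forall>i j. c i \<noteq> c j \<longrightarrow> T i j = 0) \<longrightarrow>
        (\<forall>k. (\<Sum>\<^sub>\<infinity>n\<in>{n. c n = k}. p v n) = (\<Sum>\<^sub>\<infinity>n\<in>{n. c n = k}. p (mat_apply T v) n)))"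

definition satisfies_axioms :: "(nat \<Rightarrow> 'a::real_normed_algebra) set \<Rightarrow> (nat \<Rightarrow> nat \<Rightarrow> 'a) set
      \<Rightarrow> ((nat \<Rightarrow> 'a) \<Rightarrow> nat \<Rightarrow> real) \<Rightarrow> bool" where
  "satisfies_axioms S Tr p \<longleftrightarrow> probability_rule S p \<and> axiom_A2 S p \<and> axiom_A3 S Tr p"

definition bounded_state :: "(nat \<Rightarrow> 'a::zero) \<Rightarrow> bool" where
  "bounded_state v \<longleftrightarrow> finite {n. v n \<noteq> 0}"

end

theory Submission
  imports Defs
begin

text \<open>A transformation that only mixes two worlds a and b leaves every other world's
  probability unchanged and preserves the total probability of a and b (A3 for the
  partition with the single non-trivial block {a, b}). With such moves through an empty
  world, a cyclic permutation of amplitudes shows that worlds of equal amplitude have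
  equal probability (A2 makes the emptied worlds weightless). If the amplitude of l
  exceeds that of k, one move of the same kind lowers the amplitude of l to that of k,
  shifting the surplus to an empty world m; hence
  p l(v) = p l(w) + p m(w) \<ge> p l(w) = p k(w) = p k(v). Such moves exist in all three
  theories: rotations in the plane of two worlds are unitary, and two-world stochastic
  matrices can split the weight of a world arbitrarily.\<close>

lemma has_sum_update_finite:
  fixes f g :: "nat \<Rightarrow> 'a::{topological_ab_group_add, t2_space}"
  assumes "(f has_sum s) UNIV" "finite F" "\<And>n. n \<notin> F \<Longrightarrow> g n = f n"
  shows "(g has_sum (s + (\<Sum>n\<in>F. g n - f n))) UNIV"
proof -
  have "((\<lambda>n. if n \<in> F then g n - f n else 0) has_sum (\<Sum>n\<in>F. g n - f n)) UNIV"
    by (rule has_sum_finite_neutralI[OF assms(2)]) auto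
  from has_sum_add[OF assms(1) this] show ?thesis
  proof (subst (asm) has_sum_cong)
    show "f n + (if n \<in> F then g n - f n else 0) = g n" for n
      using assms(3)[of n] by auto
  qed
qed

lemma bounded_state_obtains_empty_world:
  fixes v :: "nat \<Rightarrow> 'a::zero"
  assumes "bounded_state v"
  obtains m where "m \<noteq> l" "m \<noteq> k" "v m = 0"
proof -
  have "finite (insert l (insert k {n. v n \<noteq> 0}))"
    using assms unfolding bounded_state_def by simp
  from ex_new_if_finite[OF infinite_UNIV_nat this] show ?thesis
    using that by auto
qed

definition acts_on_pair :: "nat \<Rightarrow> nat \<Rightarrow> (nat \<Rightarrow> nat \<Rightarrow> 'a::zero) \<Rightarrow> bool" where
  "acts_on_pair a b T \<longleftrightarrow> (\<forall>i j. i \<noteq> j \<longrightarrow> \<not> (i \<in> {a, b} \<and> j \<in> {a, b}) \<longrightarrow> T i j = 0)"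

definition pair_step :: "(nat \<Rightarrow> 'a::real_normed_algebra) set \<Rightarrow> (nat \<Rightarrow> nat \<Rightarrow> 'a) set
    \<Rightarrow> nat \<Rightarrow> nat \<Rightarrow> (nat \<Rightarrow> 'a) \<Rightarrow> (nat \<Rightarrow> 'a) \<Rightarrow> bool" where
  "pair_step S Tr a b v w \<longleftrightarrow> w \<in> S \<and> (\<exists>T\<in>Tr. acts_on_pair a b T \<and> mat_apply T v = w)"

lemma axiom_A3_pair_step:
  assumes A3: "axiom_A3 S Tr p" and "v \<in> S" and step: "pair_step S Tr a b v w" and "a \<noteq> b"
  shows "p v a + p v b = p w a + p w b"
    and "n \<notin> {a, b} \<Longrightarrow> p v n = p w n"
proof -
  obtain T where T: "T \<in> Tr" "acts_on_pair a b T" "mat_apply T v = w"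
    using step unfolding pair_step_def by blast
  define c where "c = (\<lambda>n::nat. if n = b then a else n)"
  have "\<forall>i j. c i \<noteq> c j \<longrightarrow> T i j = 0"
    using T(2) unfolding acts_on_pair_def c_def by auto
  then have block: "(\<Sum>\<^sub>\<infinity>n\<in>{n. c n = k}. p v n) = (\<Sum>\<^sub>\<infinity>n\<in>{n. c n = k}. p w n)" for k
    using A3 \<open>v \<in> S\<close> T(1,3) unfolding axiom_A3_def by blast
  have "{n. c n = a} = {a, b}"
    unfolding c_def using \<open>a \<noteq> b\<close> by auto
  with block[of a] \<open>a \<noteq> b\<close> show "p v a + p v b = p w a + p w b"
    by simp
  assume "n \<notin> {a, b}"
  then have "{m. c m = n} = {n}"
    unfolding c_def by auto
  with block[of n] show "p v n = p w n"
    by simp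
qed

definition admits_moves :: "(nat \<Rightarrow> 'a::real_normed_algebra) set \<Rightarrow> (nat \<Rightarrow> nat \<Rightarrow> 'a) set \<Rightarrow> bool" where
  "admits_moves S Tr \<longleftrightarrow>
     (\<forall>v\<in>S. \<forall>a b. a \<noteq> b \<longrightarrow> v b = 0 \<longrightarrow> pair_step S Tr a b v (v(a := 0, b := v a)))"

definition admits_shrinking :: "(nat \<Rightarrow> 'a::real_normed_algebra) set \<Rightarrow> (nat \<Rightarrow> nat \<Rightarrow> 'a) set \<Rightarrow> bool" where
  "admits_shrinking S Tr \<longleftrightarrow>
     (\<forall>v\<in>S. \<forall>l m k. l \<noteq> m \<longrightarrow> v m = 0 \<longrightarrow> norm (v k) < norm (v l) \<longrightarrow>
        (\<exists>y. pair_step S Tr l m v (v(l := v k, m := y))))"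

lemma equal_amplitudes_imp_equal_probability:
  assumes A2: "axiom_A2 S p" and A3: "axiom_A3 S Tr p" and moves: "admits_moves S Tr"
    and v: "v \<in> S" "v m = 0" "v l = v k" and distinct: "l \<noteq> k" "m \<noteq> l" "m \<noteq> k"
  shows "p v l = p v k"
proof -
  text \<open>Cycle the amplitudes through the empty world: k to m, then l to k, then m to l.\<close>
  define w where "w = v(k := 0, m := v k)"
  define u where "u = w(l := 0, k := w l)"
  define r where "r = u(m := 0, l := u m)"
  have w: "pair_step S Tr k m v w"
    using moves v distinct unfolding admits_moves_def w_def by auto
  then have "w \<in> S"
    unfolding pair_step_def by blast
  have "w k = 0"
    unfolding w_def using distinct by simp
  have u: "pair_step S Tr l k w u"
    using moves \<open>w \<in> S\<close> \<open>w k = 0\<close> distinct unfolding admits_moves_def u_def by blast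
  then have "u \<in> S"
    unfolding pair_step_def by blast
  have "u l = 0"
    unfolding u_def using distinct by simp
  have r: "pair_step S Tr m l u r"
    using moves \<open>u \<in> S\<close> \<open>u l = 0\<close> distinct unfolding admits_moves_def r_def by blast
  have "r = v"
    unfolding r_def u_def w_def using v distinct by (auto simp: fun_eq_iff)
  have "p w k = 0" "p u l = 0"
    using A2 \<open>w \<in> S\<close> \<open>u \<in> S\<close> \<open>w k = 0\<close> \<open>u l = 0\<close> unfolding axiom_A2_def by blast+
  have "p v l = p w l"
    using axiom_A3_pair_step(2)[OF A3 v(1) w] distinct by auto
  also have "\<dots> = p u k"
    using axiom_A3_pair_step(1)[OF A3 \<open>w \<in> S\<close> u] \<open>p w k = 0\<close> \<open>p u l = 0\<close> distinct by simp
  also have "\<dots> = p r k"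
    using axiom_A3_pair_step(2)[OF A3 \<open>u \<in> S\<close> r] distinct by auto
  finally show ?thesis
    using \<open>r = v\<close> by simp
qed

lemma larger_amplitude_imp_larger_probability:
  assumes axioms: "satisfies_axioms S Tr p"
    and moves: "admits_moves S Tr" and shrinking: "admits_shrinking S Tr"
    and v: "v \<in> S" "bounded_state v" "norm (v k) < norm (v l)"
  shows "p v k \<le> p v l"
proof -
  have A2: "axiom_A2 S p" and A3: "axiom_A3 S Tr p"
    using axioms unfolding satisfies_axioms_def by blast+
  have "l \<noteq> k"
    using v(3) by auto
  obtain m where m: "m \<noteq> l" "m \<noteq> k" "v m = 0"
    using bounded_state_obtains_empty_world[OF v(2)] .
  obtain y where step: "pair_step S Tr l m v (v(l := v k, m := y))"
    using shrinking v m unfolding admits_shrinking_def by metis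
  define w where "w = v(l := v k, m := y)"
  have "w \<in> S"
    using step unfolding pair_step_def w_def by blast
  have "bounded_state w"
  proof -
    have "{n. w n \<noteq> 0} \<subseteq> insert m (insert l {n. v n \<noteq> 0})"
      unfolding w_def by auto
    then show ?thesis
      using v(2) finite_subset unfolding bounded_state_def by blast
  qed
  then obtain m' where m': "m' \<noteq> l" "m' \<noteq> k" "w m' = 0"
    using bounded_state_obtains_empty_world by blast
  have "w l = w k"
    unfolding w_def using m \<open>l \<noteq> k\<close> by simp
  then have "p w l = p w k"
    using equal_amplitudes_imp_equal_probability[OF A2 A3 moves \<open>w \<in> S\<close> m'(3)] m' \<open>l \<noteq> k\<close>
    by blast
  moreover have "p v l + p v m = p w l + p w m" "p v k = p w k"
    using axiom_A3_pair_step[OF A3 v(1) step] m \<open>l \<noteq> k\<close> unfolding w_def by auto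
  moreover have "p v m = 0"
    using A2 v(1) m(3) unfolding axiom_A2_def by blast
  moreover have "0 \<le> p w m"
    using axioms \<open>w \<in> S\<close> unfolding satisfies_axioms_def probability_rule_def by blast
  ultimately show ?thesis
    by linarith
qed

definition pair_mat :: "nat \<Rightarrow> nat \<Rightarrow> 'a \<Rightarrow> 'a \<Rightarrow> 'a \<Rightarrow> 'a \<Rightarrow> nat \<Rightarrow> nat \<Rightarrow> 'a::{zero,one}" where
  "pair_mat a b \<alpha> \<beta> \<gamma> \<delta> i j =
     (if i = a \<and> j = a then \<alpha> else if i = a \<and> j = b then \<beta> else if i = b \<and> j = a then \<gamma>
      else if i = b \<and> j = b then \<delta> else if i = j then 1 else 0)"

lemma acts_on_pair_pair_mat: "acts_on_pair a b (pair_mat a b \<alpha> \<beta> \<gamma> \<delta>)"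
  unfolding acts_on_pair_def pair_mat_def by auto

lemma pair_mat_row_summable:
  fixes v :: "nat \<Rightarrow> 'a::real_normed_field"
  shows "(\<lambda>j. pair_mat a b \<alpha> \<beta> \<gamma> \<delta> i j * v j) summable_on UNIV"
  by (rule has_sum_imp_summable, rule has_sum_finite_neutralI[of "{a, b, i}"]) (auto simp: pair_mat_def)

lemma mat_apply_pair_mat:
  fixes v :: "nat \<Rightarrow> 'a::real_normed_field"
  assumes "a \<noteq> b"
  shows "mat_apply (pair_mat a b \<alpha> \<beta> \<gamma> \<delta>) v = v(a := \<alpha> * v a + \<beta> * v b, b := \<gamma> * v a + \<delta> * v b)"
proof
  fix i
  have "((\<lambda>j. pair_mat a b \<alpha> \<beta> \<gamma> \<delta> i j * v j) has_sum
         (v(a := \<alpha> * v a + \<beta> * v b, b := \<gamma> * v a + \<delta> * v b)) i) UNIV"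
  proof (cases "i \<in> {a, b}")
    case True
    then show ?thesis
      using assms by (intro has_sum_finite_neutralI[of "{a, b}"]) (auto simp: pair_mat_def)
  next
    case False
    then show ?thesis
      by (intro has_sum_finite_neutralI[of "{i}"]) (auto simp: pair_mat_def)
  qed
  then show "mat_apply (pair_mat a b \<alpha> \<beta> \<gamma> \<delta>) v i = (v(a := \<alpha> * v a + \<beta> * v b, b := \<gamma> * v a + \<delta> * v b)) i"
    unfolding mat_apply_def by (simp add: infsumI)
qed

definition pair_rotation :: "nat \<Rightarrow> nat \<Rightarrow> complex \<Rightarrow> complex \<Rightarrow> nat \<Rightarrow> nat \<Rightarrow> complex" where
  "pair_rotation a b x y = pair_mat a b x (- cnj y) y (cnj x)"

lemma mat_apply_pair_rotation:
  assumes "a \<noteq> b"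
  shows "mat_apply (pair_rotation a b x y) v = v(a := x * v a - cnj y * v b, b := y * v a + cnj x * v b)"
  unfolding pair_rotation_def mat_apply_pair_mat[OF assms] by simp

lemma cmod_rotation_sum_squares:
  fixes x y u w :: complex
  shows "(cmod (x * u - cnj y * w))^2 + (cmod (y * u + cnj x * w))^2
       = ((cmod x)^2 + (cmod y)^2) * ((cmod u)^2 + (cmod w)^2)"
proof -
  have "complex_of_real ((cmod (x * u - cnj y * w))^2 + (cmod (y * u + cnj x * w))^2)
      = (x * u - cnj y * w) * cnj (x * u - cnj y * w) + (y * u + cnj x * w) * cnj (y * u + cnj x * w)"
    by (simp only: of_real_add complex_norm_square)
  also have "\<dots> = (x * cnj x + y * cnj y) * (u * cnj u + w * cnj w)"
    by (simp only: complex_cnj_diff complex_cnj_add complex_cnj_mult complex_cnj_cnj) algebra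
  also have "\<dots> = complex_of_real (((cmod x)^2 + (cmod y)^2) * ((cmod u)^2 + (cmod w)^2))"
    by (simp only: of_real_add of_real_mult complex_norm_square)
  finally show ?thesis
    using of_real_eq_iff by blast
qed

lemma has_sum_norm_sq_update_pair:
  fixes v :: "nat \<Rightarrow> 'a::real_normed_vector"
  assumes "((\<lambda>n. (norm (v n))^2) has_sum s) UNIV" "a \<noteq> b"
  shows "((\<lambda>n. (norm ((v(a := A, b := B)) n))^2) has_sum
           (s + ((norm A)^2 - (norm (v a))^2 + ((norm B)^2 - (norm (v b))^2)))) UNIV"
  using has_sum_update_finite[OF assms(1), of "{a, b}" "\<lambda>n. (norm ((v(a := A, b := B)) n))^2"] assms(2)
  by simp

lemma unitary_pair_rotation:
  assumes ab: "a \<noteq> b" and unit: "(cmod x)^2 + (cmod y)^2 = 1"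
  shows "unitary_mat (pair_rotation a b x y)"
  unfolding unitary_mat_def
proof (intro conjI allI impI)
  fix v i
  show "(\<lambda>j. pair_rotation a b x y i j * v j) summable_on UNIV"
    unfolding pair_rotation_def by (rule pair_mat_row_summable)
next
  fix v
  assume "is_l2 v"
  then have "((\<lambda>n. (cmod (v n))^2) has_sum l2norm_sq v) UNIV"
    unfolding is_l2_def l2norm_sq_def by simp
  note has_sum_norm_sq_update_pair[OF this ab, of "x * v a - cnj y * v b" "y * v a + cnj x * v b"]
  moreover have "(cmod (x * v a - cnj y * v b))^2 - (cmod (v a))^2
      + ((cmod (y * v a + cnj x * v b))^2 - (cmod (v b))^2) = 0"
    using cmod_rotation_sum_squares[of x "v a" y "v b"] unit by simp
  ultimately have "((\<lambda>n. (cmod (mat_apply (pair_rotation a b x y) v n))^2) has_sum l2norm_sq v) UNIV"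
    unfolding mat_apply_pair_rotation[OF ab] by simp
  then show "is_l2 (mat_apply (pair_rotation a b x y) v)"
    and "l2norm_sq (mat_apply (pair_rotation a b x y) v) = l2norm_sq v"
    unfolding is_l2_def l2norm_sq_def using has_sum_iff by blast+
next
  fix w
  assume "is_l2 w"
  have xy: "x * cnj x + y * cnj y = 1"
    using unit by (metis complex_norm_square of_real_1 of_real_add)
  text \<open>The inverse is the adjoint rotation.\<close>
  define v where "v = w(a := cnj x * w a + cnj y * w b, b := - y * w a + x * w b)"
  have "is_l2 v"
    using \<open>is_l2 w\<close> has_sum_norm_sq_update_pair[OF _ ab] unfolding is_l2_def v_def
    by (metis has_sum_imp_summable summable_iff_has_sum_infsum)
  moreover have "mat_apply (pair_rotation a b x y) v = w"
  proof -
    have "x * (cnj x * s + cnj y * t) - cnj y * (x * t - y * s) = (x * cnj x + y * cnj y) * s"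
      and "y * (cnj x * s + cnj y * t) + cnj x * (x * t - y * s) = (x * cnj x + y * cnj y) * t"
      for s t :: complex
      by algebra+
    then show ?thesis
      unfolding mat_apply_pair_rotation[OF ab] v_def using ab xy by (intro ext) simp
  qed
  ultimately show "\<exists>v. is_l2 v \<and> mat_apply (pair_rotation a b x y) v = w"
    by blast
qed

lemma quantum_states_iff: "v \<in> quantum_states \<longleftrightarrow> is_l2 v \<and> l2norm_sq v = 1"
  unfolding quantum_states_def is_l2_def l2norm_sq_def using has_sum_iff by blast

lemma quantum_states_unitary_closed:
  "unitary_mat T \<Longrightarrow> v \<in> quantum_states \<Longrightarrow> mat_apply T v \<in> quantum_states"
  unfolding quantum_states_iff unitary_mat_def by simp

lemma unnormalised_states_unitary_closed:
  "unitary_mat T \<Longrightarrow> v \<in> unnormalised_states \<Longrightarrow> mat_apply T v \<in> unnormalised_states"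
  unfolding unnormalised_states_def unitary_mat_def by simp

lemma unitary_pair_step:
  assumes closed: "\<And>T v. unitary_mat T \<Longrightarrow> v \<in> S \<Longrightarrow> mat_apply T v \<in> S"
    and v: "v \<in> S" "v b = 0" and "a \<noteq> b"
    and norms: "(cmod A)^2 + (cmod B)^2 = (cmod (v a))^2"
  shows "pair_step S unitary_transformations a b v (v(a := A, b := B))"
proof -
  obtain x y where xy: "(cmod x)^2 + (cmod y)^2 = 1" "x * v a = A" "y * v a = B"
  proof (cases "v a = 0")
    case True
    with norms have "A = 0" "B = 0"
      by (simp_all add: add_nonneg_eq_0_iff)
    with True show ?thesis
      using that[of 1 0] by simp
  next
    case False
    have "(cmod (A / v a))^2 + (cmod (B / v a))^2 = ((cmod A)^2 + (cmod B)^2) / (cmod (v a))^2"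
      by (simp add: norm_divide power_divide add_divide_distrib)
    with False norms show ?thesis
      using that[of "A / v a" "B / v a"] by simp
  qed
  have "mat_apply (pair_rotation a b x y) v = v(a := A, b := B)"
    unfolding mat_apply_pair_rotation[OF \<open>a \<noteq> b\<close>] using v(2) xy by simp
  moreover have "unitary_mat (pair_rotation a b x y)"
    using unitary_pair_rotation[OF \<open>a \<noteq> b\<close> xy(1)] .
  moreover have "acts_on_pair a b (pair_rotation a b x y)"
    unfolding pair_rotation_def by (rule acts_on_pair_pair_mat)
  ultimately show ?thesis
    unfolding pair_step_def unitary_transformations_def using closed[OF _ v(1)] by force
qed

lemma admits_moves_unitary:
  assumes "\<And>T v. unitary_mat T \<Longrightarrow> v \<in> S \<Longrightarrow> mat_apply T v \<in> S"
  shows "admits_moves S unitary_transformations"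
  unfolding admits_moves_def using unitary_pair_step[OF assms] by simp

lemma admits_shrinking_unitary:
  assumes closed: "\<And>T v. unitary_mat T \<Longrightarrow> v \<in> S \<Longrightarrow> mat_apply T v \<in> S"
  shows "admits_shrinking S unitary_transformations"
  unfolding admits_shrinking_def
proof (intro ballI allI impI)
  fix v l m k
  assume "v \<in> S" "l \<noteq> m" "v m = 0" "cmod (v k) < cmod (v l)"
  define y where "y = complex_of_real (sqrt ((cmod (v l))^2 - (cmod (v k))^2))"
  have "(cmod (v k))^2 < (cmod (v l))^2"
    using \<open>cmod (v k) < cmod (v l)\<close> by (simp add: power_strict_mono)
  then have "(cmod (v k))^2 + (cmod y)^2 = (cmod (v l))^2"
    unfolding y_def by (simp add: less_imp_le)
  then show "\<exists>y. pair_step S unitary_transformations l m v (v(l := v k, m := y))"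
    using unitary_pair_step[OF closed \<open>v \<in> S\<close> \<open>v m = 0\<close> \<open>l \<noteq> m\<close>] by blast
qed

lemma pair_mat_stochastic:
  fixes \<alpha> \<beta> \<gamma> \<delta> :: real
  assumes "a \<noteq> b" "0 \<le> \<alpha>" "0 \<le> \<beta>" "0 \<le> \<gamma>" "0 \<le> \<delta>" "\<alpha> + \<gamma> = 1" "\<beta> + \<delta> = 1"
  shows "pair_mat a b \<alpha> \<beta> \<gamma> \<delta> \<in> stochastic_transformations"
  unfolding stochastic_transformations_def mem_Collect_eq
proof (intro conjI allI)
  fix i j
  show "0 \<le> pair_mat a b \<alpha> \<beta> \<gamma> \<delta> i j"
    unfolding pair_mat_def using assms
    by (cases "i = a"; cases "j = a"; cases "i = b"; cases "j = b"; cases "i = j") simp_all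
next
  fix j
  show "((\<lambda>i. pair_mat a b \<alpha> \<beta> \<gamma> \<delta> i j) has_sum 1) UNIV"
  proof (cases "j \<in> {a, b}")
    case True
    then show ?thesis
      using assms by (intro has_sum_finite_neutralI[of "{a, b}"]) (auto simp: pair_mat_def)
  next
    case False
    then show ?thesis
      by (intro has_sum_finite_neutralI[of "{j}"]) (auto simp: pair_mat_def)
  qed
qed

lemma stochastic_states_update_pair:
  assumes "v \<in> stochastic_states" "a \<noteq> b" "0 \<le> A" "0 \<le> B" "A + B = v a + v b"
  shows "v(a := A, b := B) \<in> stochastic_states"
proof -
  have "(v has_sum 1) UNIV" "\<forall>n. 0 \<le> v n"
    using assms(1) unfolding stochastic_states_def by auto
  note has_sum_update_finite[OF this(1), of "{a, b}" "v(a := A, b := B)"]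
  moreover have "1 + (\<Sum>n\<in>{a, b}. (v(a := A, b := B)) n - v n) = 1"
    using assms(2,5) by simp
  ultimately have "(v(a := A, b := B) has_sum 1) UNIV"
    by simp
  with \<open>\<forall>n. 0 \<le> v n\<close> assms(3,4) show ?thesis
    unfolding stochastic_states_def by auto
qed

lemma stochastic_pair_step:
  assumes v: "v \<in> stochastic_states" "v b = 0" and "a \<noteq> b"
    and "0 \<le> A" "0 \<le> B" "A + B = v a"
  shows "pair_step stochastic_states stochastic_transformations a b v (v(a := A, b := B))"
proof -
  have "0 \<le> v a"
    using v(1) unfolding stochastic_states_def by simp
  obtain \<alpha> where \<alpha>: "0 \<le> \<alpha>" "\<alpha> \<le> 1" "\<alpha> * v a = A" "(1 - \<alpha>) * v a = B"
  proof (cases "v a = 0")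
    case True
    with assms(4-6) show ?thesis
      using that[of 1] by simp
  next
    case False
    with \<open>0 \<le> v a\<close> have "0 < v a"
      by simp
    show ?thesis
    proof (rule that[of "A / v a"])
      show "0 \<le> A / v a" "A / v a \<le> 1" "A / v a * v a = A"
        using \<open>0 < v a\<close> assms(4-6) by simp_all
      show "(1 - A / v a) * v a = B"
        using \<open>0 < v a\<close> assms(6) by (simp add: algebra_simps)
    qed
  qed
  have "mat_apply (pair_mat a b \<alpha> 1 (1 - \<alpha>) 0) v = v(a := A, b := B)"
    unfolding mat_apply_pair_mat[OF \<open>a \<noteq> b\<close>] using v(2) \<alpha> by simp
  moreover have "pair_mat a b \<alpha> 1 (1 - \<alpha>) 0 \<in> stochastic_transformations"
    using pair_mat_stochastic \<open>a \<noteq> b\<close> \<alpha> by simp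
  moreover have "v(a := A, b := B) \<in> stochastic_states"
    using stochastic_states_update_pair assms by simp
  ultimately show ?thesis
    unfolding pair_step_def using acts_on_pair_pair_mat by blast
qed

lemma admits_moves_stochastic: "admits_moves stochastic_states stochastic_transformations"
  unfolding admits_moves_def
proof (intro ballI allI impI)
  fix v a b
  assume "v \<in> stochastic_states" "a \<noteq> b" "v b = 0"
  moreover have "0 \<le> v a"
    using \<open>v \<in> stochastic_states\<close> unfolding stochastic_states_def by simp
  ultimately show "pair_step stochastic_states stochastic_transformations a b v (v(a := 0, b := v a))"
    using stochastic_pair_step by simp
qed

lemma admits_shrinking_stochastic: "admits_shrinking stochastic_states stochastic_transformations"
  unfolding admits_shrinking_def
proof (intro ballI allI impI)
  fix v l m k
  assume "v \<in> stochastic_states" "l \<noteq> m" "v m = 0" "norm (v k) < norm (v l)"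
  moreover have "0 \<le> v k" "0 \<le> v l"
    using \<open>v \<in> stochastic_states\<close> unfolding stochastic_states_def by simp_all
  ultimately have "pair_step stochastic_states stochastic_transformations l m v (v(l := v k, m := v l - v k))"
    using stochastic_pair_step by simp
  then show "\<exists>y. pair_step stochastic_states stochastic_transformations l m v (v(l := v k, m := y))" ..
qed

theorem lemma2:
  shows "(\<forall>p v l k. satisfies_axioms quantum_states unitary_transformations p
             \<and> v \<in> quantum_states \<and> bounded_state v \<and> cmod (v l) > cmod (v k)
             \<longrightarrow> p v l \<ge> p v k)
       \<and> (\<forall>p v l k. satisfies_axioms unnormalised_states unitary_transformations p
             \<and> v \<in> unnormalised_states \<and> bounded_state v \<and> cmod (v l) > cmod (v k)
             \<longrightarrow> p v l \<ge> p v k)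
       \<and> (\<forall>p v l k. satisfies_axioms stochastic_states stochastic_transformations p
             \<and> v \<in> stochastic_states \<and> bounded_state v \<and> \<bar>v l\<bar> > \<bar>v k\<bar>
             \<longrightarrow> p v l \<ge> p v k)"
proof (intro conjI allI impI; elim conjE)
  fix p v l k
  assume "satisfies_axioms quantum_states unitary_transformations p"
    "v \<in> quantum_states" "bounded_state v" "cmod (v l) > cmod (v k)"
  then show "p v l \<ge> p v k"
    using larger_amplitude_imp_larger_probability admits_moves_unitary admits_shrinking_unitary
      quantum_states_unitary_closed by blast
next
  fix p v l k
  assume "satisfies_axioms unnormalised_states unitary_transformations p"
    "v \<in> unnormalised_states" "bounded_state v" "cmod (v l) > cmod (v k)"
  then show "p v l \<ge> p v k"
    using larger_amplitude_imp_larger_probability admits_moves_unitary admits_shrinking_unitary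
      unnormalised_states_unitary_closed by blast
next
  fix p v l k
  assume "satisfies_axioms stochastic_states stochastic_transformations p"
    "v \<in> stochastic_states" "bounded_state v" "\<bar>v l\<bar> > \<bar>v k\<bar>"
  then show "p v l \<ge> p v k"
    using larger_amplitude_imp_larger_probability[OF _ admits_moves_stochastic admits_shrinking_stochastic]
    by simp
qed

end
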